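(* Consider the setting in the context with $P_i=\tau_iI_n$, $Q_i=\zeta_iI_n$, $\rho>0$, $\gamma\in(0,2)$, and assume (P1) admits a KKT point. If for every $i\in\mathcal{V}$ $$\tau_i>\rho\Big(\frac{N}{2-\gamma}-1\Big)d_i,\qquad \zeta_i>\frac{C_i}{m}(C_i+m),$$ then the sequence $\bm{u}^k=(\check{\bm{W}}^k,\hat{\bm{W}}^k,\lambda^k)$ generated by the algorithm converges to an optimal primal–dual (KKT) solution $\bm{u}^*$ of (P1).
   Context: Let $\mathcal{G}=(\mathcal{V},\mathcal{E})$ be a connected undirected graph with $\mathcal{V}=\{1,\dots,N\}$, $N\ge 2$, and let $d_i$ be the degree of $i$. Variables are $\check{\bm{w}}_i,\hat{\bm{w}}_i\in\mathbb{R}^n$; write $\check{\bm{W}}=(\check{\bm{w}}_1,\dots,\check{\bm{w}}_N)$, $\hat{\bm{W}}$ likewise, $\bm{z}_i=(\check{\bm{w}}_i,\hat{\bm{w}}_i)$, $\bm{Z}=(\check{\bm{W}},\hat{\bm{W}})$. The matrix $\bm{A}\in\mathbb{R}^{|\mathcal{E}|n\times Nn}$ has one block row per edge $\{i,j\}$ ($i<j$) with $I_n$ in block column $i$, $-I_n$ in block column $j$, zeros elsewhere; $A_i$ is its $i$-th block column. Each $f_i:\mathbb{R}^n\times\mathbb{R}^n\to\mathbb{R}$ is differentiable, jointly convex, with $\nabla f_i$ Lipschitz with constant $C_i$. Let $\mu_1\ge0$, $\mu_2>0$, $F_i(\bm{z}_i)=f_i(\check{\bm{w}}_i,\hat{\bm{w}}_i)+\frac{\mu_1}{2}\|\check{\bm{w}}_i\|^2+\frac{\mu_2}{2}\|\hat{\bm{w}}_i\|^2$,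 $\bm{F}(\bm{Z})=\sum_iF_i(\bm{z}_i)$, and $m$ a constant with $0<m\le\mu_2$. Problem (P1): minimize $\bm{F}(\bm{Z})$ s.t. $\bm{A}\check{\bm{W}}=0$; a KKT point is $(\check{\bm{W}}^*,\hat{\bm{W}}^*,\lambda^* )$ with $\bm{A}\check{\bm{W}}^*=0$, $A_i^T\lambda^*=\nabla_{\check{\bm{w}}_i}F_i(\bm{z}_i^* )$, $\nabla_{\hat{\bm{w}}_i}F_i(\bm{z}_i^* )=0$. Algorithm: with $\mathcal{L}_\rho=\bm{F}(\bm{Z})-\lambda^T\bm{A}\check{\bm{W}}+\frac\rho2\|\bm{A}\check{\bm{W}}\|^2$, from arbitrary $\check{\bm{W}}^0,\hat{\bm{W}}^0,\lambda^0$, for $k=0,1,\dots$: (i) for all $i$ in parallel $\check{\bm{w}}_i^{k+1}=\arg\min_{\check{\bm{w}}_i}\mathcal{L}_\rho(\check{\bm{w}}_i,\check{\bm{W}}^k_{-i},\hat{\bm{W}}^k,\lambda^k)+\frac12\|\check{\bm{w}}_i-\check{\bm{w}}_i^k\|^2_{P_i}$; (ii) $\lambda^{k+1}=\lambda^k-\gamma\rho\bm{A}\check{\bm{W}}^{k+1}$; (iii) for all $i$ in parallel $\hat{\bm{w}}_i^{k+1}=\arg\min_{\hat{\bm{w}}_i}F_i(\check{\bm{w}}_i^{k+1},\hat{\bm{w}}_i)+\frac12\|\hat{\bm{w}}_i-\hat{\bm{w}}_i^k\|^2_{Q_i}$. Here $\|x\|^2_S=x^TSx$. *)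

theory Defs
  imports "HOL-Analysis.Analysis"
begin

text \<open>Vertices are 0..N-1; edges are pairs (i,j) with i<j<N. Block vectors are functions
  nat => real^'n (only indices below N matter); dual variables are functions on edges.\<close>

definition valid_edges :: "nat \<Rightarrow> (nat \<times> nat) set \<Rightarrow> bool" where
  "valid_edges N E \<longleftrightarrow> E \<subseteq> {(i,j). i < j \<and> j < N}"

definition graph_connected :: "nat \<Rightarrow> (nat \<times> nat) set \<Rightarrow> bool" where
  "graph_connected N E \<longleftrightarrow> (\<forall>i<N. \<forall>j<N. (i,j) \<in> (E \<union> E\<inverse>)\<^sup>*)"

definition degree :: "(nat \<times> nat) set \<Rightarrow> nat \<Rightarrow> nat" where
  "degree E i = card {e\<in>E. fst e = i \<or> snd e = i}"

definition edge_diff :: "(nat \<Rightarrow> 'a::ab_group_add) \<Rightarrow> nat \<times> nat \<Rightarrow> 'a" where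
  "edge_diff W e = W (fst e) - W (snd e)"

definition AT :: "(nat \<times> nat) set \<Rightarrow> (nat \<times> nat \<Rightarrow> 'a::ab_group_add) \<Rightarrow> nat \<Rightarrow> 'a" where
  "AT E lam i = (\<Sum>e\<in>{e\<in>E. fst e = i}. lam e) - (\<Sum>e\<in>{e\<in>E. snd e = i}. lam e)"

definition Fi :: "(nat \<Rightarrow> ((real^'n) \<times> (real^'n)) \<Rightarrow> real) \<Rightarrow> real \<Rightarrow> real \<Rightarrow> nat
    \<Rightarrow> real^'n \<Rightarrow> real^'n \<Rightarrow> real" where
  "Fi f mu1 mu2 i wc wh = f i (wc, wh) + mu1 / 2 * (norm wc)\<^sup>2 + mu2 / 2 * (norm wh)\<^sup>2"

definition FF :: "(nat \<Rightarrow> ((real^'n) \<times> (real^'n)) \<Rightarrow> real) \<Rightarrow> real \<Rightarrow> real \<Rightarrow> nat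
    \<Rightarrow> (nat \<Rightarrow> real^'n) \<Rightarrow> (nat \<Rightarrow> real^'n) \<Rightarrow> real" where
  "FF f mu1 mu2 N Wc Wh = (\<Sum>i<N. Fi f mu1 mu2 i (Wc i) (Wh i))"

definition lagr :: "(nat \<Rightarrow> ((real^'n) \<times> (real^'n)) \<Rightarrow> real) \<Rightarrow> real \<Rightarrow> real \<Rightarrow> nat
    \<Rightarrow> (nat \<times> nat) set \<Rightarrow> real \<Rightarrow> (nat \<Rightarrow> real^'n) \<Rightarrow> (nat \<Rightarrow> real^'n)
    \<Rightarrow> (nat \<times> nat \<Rightarrow> real^'n) \<Rightarrow> real" where
  "lagr f mu1 mu2 N E rho Wc Wh lam =
     FF f mu1 mu2 N Wc Wh - (\<Sum>e\<in>E. lam e \<bullet> edge_diff Wc e)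
     + rho / 2 * (\<Sum>e\<in>E. (norm (edge_diff Wc e))\<^sup>2)"

text \<open>KKT point of (P1); gc i, gh i are the partial gradients of f i, so that
  nabla_{wc} F_i = gc i z + mu1 wc and nabla_{wh} F_i = gh i z + mu2 wh.\<close>
definition is_KKT :: "(nat \<Rightarrow> ((real^'n) \<times> (real^'n)) \<Rightarrow> real^'n) \<Rightarrow> (nat \<Rightarrow> ((real^'n) \<times> (real^'n)) \<Rightarrow> real^'n)
    \<Rightarrow> real \<Rightarrow> real \<Rightarrow> nat \<Rightarrow> (nat \<times> nat) set
    \<Rightarrow> (nat \<Rightarrow> real^'n) \<Rightarrow> (nat \<Rightarrow> real^'n) \<Rightarrow> (nat \<times> nat \<Rightarrow> real^'n) \<Rightarrow> bool" where
  "is_KKT gc gh mu1 mu2 N E Wc Wh lam \<longleftrightarrow>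
     (\<forall>e\<in>E. edge_diff Wc e = 0) \<and>
     (\<forall>i<N. AT E lam i = gc i (Wc i, Wh i) + mu1 *\<^sub>R Wc i) \<and>
     (\<forall>i<N. gh i (Wc i, Wh i) + mu2 *\<^sub>R Wh i = 0)"

end

theory Submission
  imports Defs
begin

text \<open>Every KKT point u* makes the iterates Fejer monotone in the metric
  H = diag(tau i + rho d_i, zeta i, 1 / (gamma rho)): the optimality conditions of the two proximal
  steps, the KKT conditions, convexity of f_i and the descent lemma for its Lipschitz gradient show
  that the H-distance to u* drops by a fixed multiple of
  norm (A x^(k+1))^2 + norm (x^k - x^(k+1))^2 + norm (y^k - y^(k+1))^2, and the bounds on tau i and
  zeta i are exactly what makes that multiple positive. So the iterates are bounded and these
  residuals vanish; a convergent subsequence exists, and passing to the limit in the optimality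
  conditions shows that its limit is a KKT point. Fejer monotonicity with respect to this limit then
  gives convergence of the whole sequence.\<close>

section \<open>Convex analysis\<close>

lemma gradient_zero_at_minimum:
  fixes phi :: "'a::real_inner \<Rightarrow> real"
  assumes "(phi has_derivative (\<lambda>v. G \<bullet> v)) (at x)" and "\<And>w. phi x \<le> phi w"
  shows "G = 0"
proof -
  have "(\<lambda>v. G \<bullet> v) = (\<lambda>v. 0)"
    using has_derivative_local_min[OF assms(1)] assms(2) by (simp add: always_eventually)
  then show ?thesis by (metis inner_eq_zero_iff)
qed

lemma convex_on_gradient_ineq:
  fixes f :: "'a::real_inner \<Rightarrow> real"
  assumes cvx: "convex_on UNIV f" and grad: "(f has_derivative (\<lambda>h. g \<bullet> h)) (at q)"
  shows "f q + g \<bullet> (s - q) \<le> f s"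
proof -
  define h where "h t = f (q + t *\<^sub>R (s - q))" for t :: real
  have "convex_on UNIV h"
  proof (rule convex_onI)
    fix t x y :: real
    assume "0 < t" "t < 1"
    have "q + ((1 - t) *\<^sub>R x + t *\<^sub>R y) *\<^sub>R (s - q)
        = (1 - t) *\<^sub>R (q + x *\<^sub>R (s - q)) + t *\<^sub>R (q + y *\<^sub>R (s - q))"
      by (simp add: algebra_simps)
    then show "h ((1 - t) *\<^sub>R x + t *\<^sub>R y) \<le> (1 - t) * h x + t * h y"
      using convex_onD[OF cvx, of t "q + x *\<^sub>R (s - q)" "q + y *\<^sub>R (s - q)"] \<open>0 < t\<close> \<open>t < 1\<close>
      by (simp add: h_def)
  qed simp
  moreover have "(h has_field_derivative (g \<bullet> (s - q))) (at 0)"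
  proof -
    have "((\<lambda>t. q + t *\<^sub>R (s - q)) has_derivative (\<lambda>t. t *\<^sub>R (s - q))) (at 0)"
      by (auto intro!: derivative_eq_intros)
    moreover have "(f has_derivative (\<lambda>h. g \<bullet> h)) (at (q + 0 *\<^sub>R (s - q)))"
      using grad by simp
    ultimately have "(h has_derivative (\<lambda>t. g \<bullet> (t *\<^sub>R (s - q)))) (at 0)"
      unfolding h_def by (rule has_derivative_compose)
    then show ?thesis
      by (simp add: has_field_derivative_def mult.commute[of _ "_ \<bullet> _"])
  qed
  ultimately have "(g \<bullet> (s - q)) * (1 - 0) \<le> h 1 - h 0"
    by (intro convex_on_imp_above_tangent) auto
  then show ?thesis by (simp add: h_def)
qed

lemma lipschitz_gradient_descent_ineq:
  fixes f :: "'a::real_inner \<Rightarrow> real"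
  assumes grad: "\<And>z. (f has_derivative (\<lambda>h. G z \<bullet> h)) (at z)"
    and lip: "\<And>z z'. norm (G z - G z') \<le> C * norm (z - z')"
  shows "f p \<le> f q + G q \<bullet> (p - q) + C / 2 * (norm (p - q))\<^sup>2"
proof -
  define d where "d = p - q"
  define h where "h t = f (q + t *\<^sub>R d) - t * (G q \<bullet> d) - C / 2 * t\<^sup>2 * (norm d)\<^sup>2" for t :: real
  have "h 1 \<le> h 0"
  proof (rule DERIV_nonpos_imp_nonincreasing[of 0 1 h])
    fix t :: real
    assume t: "0 \<le> t" "t \<le> 1"
    have "((\<lambda>t. q + t *\<^sub>R d) has_derivative (\<lambda>s. s *\<^sub>R d)) (at t)"
      by (auto intro!: derivative_eq_intros)
    from has_derivative_compose[OF this grad]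
    have "((\<lambda>t. f (q + t *\<^sub>R d)) has_field_derivative (G (q + t *\<^sub>R d) \<bullet> d)) (at t)"
      by (simp add: has_field_derivative_def mult.commute[of _ "_ \<bullet> _"])
    then have "(h has_field_derivative (G (q + t *\<^sub>R d) - G q) \<bullet> d - C * t * (norm d)\<^sup>2) (at t)"
      unfolding h_def
      by (auto intro!: derivative_eq_intros simp: inner_diff_left power2_eq_square)
    moreover have "(G (q + t *\<^sub>R d) - G q) \<bullet> d \<le> C * t * (norm d)\<^sup>2"
    proof -
      have "(G (q + t *\<^sub>R d) - G q) \<bullet> d \<le> norm (G (q + t *\<^sub>R d) - G q) * norm d"
        by (rule norm_cauchy_schwarz)
      also have "\<dots> \<le> C * norm (t *\<^sub>R d) * norm d"
        using lip[of "q + t *\<^sub>R d" q] by (simp add: mult_right_mono)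
      also have "\<dots> = C * t * (norm d)\<^sup>2"
        using t by (simp add: power2_eq_square)
      finally show ?thesis .
    qed
    ultimately show "\<exists>y. (h has_real_derivative y) (at t) \<and> y \<le> 0"
      by (intro exI[of _ "(G (q + t *\<^sub>R d) - G q) \<bullet> d - C * t * (norm d)\<^sup>2"]) simp
  qed simp
  then show ?thesis by (simp add: h_def d_def)
qed

lemma young_ineq:
  fixes a b C m :: real
  assumes "0 < m"
  shows "C * a * b \<le> m * b\<^sup>2 + C\<^sup>2 / (4 * m) * a\<^sup>2"
proof -
  have "0 \<le> (2 * m * b - C * a)\<^sup>2" by simp
  then have "4 * m * (C * a * b) \<le> 4 * m * (m * b\<^sup>2 + C\<^sup>2 / (4 * m) * a\<^sup>2)"
    using assms by (simp add: power2_eq_square algebra_simps)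
  then show ?thesis using assms by simp
qed

lemma young_ineq_inner:
  fixes a w :: "'a::real_inner"
  assumes "0 < t"
  shows "- (t * (norm w)\<^sup>2) - (norm a)\<^sup>2 / t \<le> 2 * (a \<bullet> w)"
proof -
  have "0 \<le> (norm (t *\<^sub>R w + a))\<^sup>2" by simp
  also have "\<dots> = t * (t * (norm w)\<^sup>2 + 2 * (a \<bullet> w)) + (norm a)\<^sup>2"
    by (simp add: power2_norm_eq_inner inner_commute algebra_simps)
  finally show ?thesis
    using assms by (simp add: field_simps)
qed

lemma convex_lipschitz_gradient_monotone_ineq:
  fixes f :: "'a::real_inner \<Rightarrow> real"
  assumes cvx: "convex_on UNIV f" and grad: "\<And>z. (f has_derivative (\<lambda>h. G z \<bullet> h)) (at z)"
    and lip: "\<And>z z'. norm (G z - G z') \<le> C * norm (z - z')"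
  shows "- C / 2 * (norm (p - q))\<^sup>2 \<le> (G q - G s) \<bullet> (p - s)"
proof -
  have "f p \<le> f q + G q \<bullet> (p - q) + C / 2 * (norm (p - q))\<^sup>2"
    by (rule lipschitz_gradient_descent_ineq[OF grad lip])
  moreover have "f q + G q \<bullet> (s - q) \<le> f s" "f s + G s \<bullet> (p - s) \<le> f p"
    by (rule convex_on_gradient_ineq[OF cvx grad])+
  moreover have "G q \<bullet> (p - s) = G q \<bullet> (p - q) - G q \<bullet> (s - q)"
    by (simp add: inner_diff_right)
  ultimately show ?thesis
    by (simp add: inner_diff_left)
qed

text \<open>The x-gradient is evaluated at the stale point (x, y0), as in one Gauss-Seidel sweep; the
  error this causes is absorbed by the descent lemma and by Young's inequality against the term
  m (norm (y - ys))^2.\<close>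
lemma convex_lipschitz_gradient_three_point:
  fixes f :: "'a::real_inner \<times> 'b::real_inner \<Rightarrow> real"
  assumes cvx: "convex_on UNIV f"
    and grad: "\<And>z. (f has_derivative (\<lambda>(a, b). gx z \<bullet> a + gy z \<bullet> b)) (at z)"
    and lip: "\<And>z z'. norm ((gx z, gy z) - (gx z', gy z')) \<le> C * norm (z - z')"
    and m: "0 < m"
  shows "- (C / 2 + C\<^sup>2 / (4 * m)) * (norm (y0 - y))\<^sup>2
    \<le> (gx (x, y0) - gx (xs, ys)) \<bullet> (x - xs) + (gy (x, y) - gy (xs, ys)) \<bullet> (y - ys)
      + m * (norm (y - ys))\<^sup>2"
proof -
  define G where "G z = (gx z, gy z)" for z
  have G_grad: "(f has_derivative (\<lambda>h. G z \<bullet> h)) (at z)" for z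
  proof -
    have "(\<lambda>(a, b). gx z \<bullet> a + gy z \<bullet> b) = (\<lambda>h. G z \<bullet> h)"
      by (auto simp: G_def fun_eq_iff)
    then show ?thesis using grad[of z] by simp
  qed
  have G_lip: "norm (G z - G z') \<le> C * norm (z - z')" for z z'
    using lip by (simp add: G_def)
  have monotone: "- C / 2 * (norm (y0 - y))\<^sup>2
      \<le> (gx (x, y0) - gx (xs, ys)) \<bullet> (x - xs) + (gy (x, y0) - gy (xs, ys)) \<bullet> (y - ys)"
    using convex_lipschitz_gradient_monotone_ineq[OF cvx G_grad G_lip, of "(x, y)" "(x, y0)" "(xs, ys)"]
    by (simp add: G_def norm_Pair norm_minus_commute)
  have "norm (gy (x, y) - gy (x, y0)) \<le> norm (G (x, y) - G (x, y0))"
    using norm_snd_le[of "gy (x, y) - gy (x, y0)" "gx (x, y) - gx (x, y0)"] by (simp add: G_def)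
  also have "\<dots> \<le> C * norm (y0 - y)"
    using G_lip[of "(x, y)" "(x, y0)"] by (simp add: norm_Pair norm_minus_commute)
  finally have "- (C * norm (y0 - y) * norm (y - ys)) \<le> (gy (x, y) - gy (x, y0)) \<bullet> (y - ys)"
    using norm_cauchy_schwarz[of "- (gy (x, y) - gy (x, y0))" "y - ys"]
    by (smt (verit) inner_minus_left mult_right_mono norm_ge_zero norm_minus_cancel)
  moreover have "C * norm (y0 - y) * norm (y - ys)
      \<le> m * (norm (y - ys))\<^sup>2 + C\<^sup>2 / (4 * m) * (norm (y0 - y))\<^sup>2"
    by (rule young_ineq[OF m])
  moreover have "(gy (x, y) - gy (xs, ys)) \<bullet> (y - ys)
      = (gy (x, y0) - gy (xs, ys)) \<bullet> (y - ys) + (gy (x, y) - gy (x, y0)) \<bullet> (y - ys)"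
    by (simp add: inner_diff_left)
  ultimately show ?thesis
    using monotone by (simp add: algebra_simps)
qed

lemma lipschitz_bound_nonneg:
  fixes g :: "'a::real_normed_vector \<Rightarrow> 'b::real_normed_vector"
  assumes "norm (g x - g y) \<le> C * norm (x - y)" and "x \<noteq> y"
  shows "0 \<le> C"
  using assms by (smt (verit) norm_ge_zero zero_less_norm_iff right_minus_eq mult_neg_pos)

lemma sq_norm_bounded_tendsto_zero:
  fixes v :: "nat \<Rightarrow> 'a::real_normed_vector"
  assumes c: "0 < c" and bound: "\<And>k. c * (norm (v k))\<^sup>2 \<le> d k" and d: "d \<longlonglongrightarrow> 0"
  shows "v \<longlonglongrightarrow> 0"
proof (rule Lim_null_comparison)
  show "\<forall>\<^sub>F k in sequentially. norm (v k) \<le> sqrt (d k / c)"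
    using bound c by (intro always_eventually allI real_le_rsqrt) (simp add: pos_le_divide_eq mult.commute)
  show "(\<lambda>k. sqrt (d k / c)) \<longlonglongrightarrow> 0"
    using tendsto_real_sqrt[OF tendsto_divide_zero[OF d, of c]] by simp
qed

lemma sq_norm_bounded_imp_bounded:
  fixes v :: "nat \<Rightarrow> 'a::real_normed_vector"
  assumes c: "0 < c" and bound: "\<And>k. c * (norm (v k - x))\<^sup>2 \<le> B"
  shows "bounded (range v)"
  unfolding bounded_iff
proof (intro exI ballI)
  fix y assume "y \<in> range v"
  then obtain k where y: "y = v k" by auto
  have "norm (v k - x) \<le> sqrt (B / c)"
    using bound[of k] c by (intro real_le_rsqrt) (simp add: pos_le_divide_eq mult.commute)
  then show "norm y \<le> norm x + sqrt (B / c)"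
    using norm_triangle_sub[of "v k" x] y by simp
qed

lemma finite_family_convergent_subseq:
  fixes s :: "'i \<Rightarrow> nat \<Rightarrow> 'a::heine_borel"
  assumes "finite I" and "\<And>j. j \<in> I \<Longrightarrow> bounded (range (s j))"
  obtains r l where "strict_mono r" and "\<And>j. j \<in> I \<Longrightarrow> (s j \<circ> r) \<longlonglongrightarrow> l j"
proof -
  have "\<exists>r l. strict_mono r \<and> (\<forall>j\<in>I. (s j \<circ> r) \<longlonglongrightarrow> l j)"
    using assms
  proof (induction I rule: finite_induct)
    case empty
    show ?case by (intro exI[of _ id]) (simp add: strict_mono_def)
  next
    case (insert j I)
    have "\<exists>r l. strict_mono r \<and> (\<forall>j\<in>I. (s j \<circ> r) \<longlonglongrightarrow> l j)"
      by (rule insert.IH, rule insert.prems) simp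
    then obtain r l where r: "strict_mono r" "\<forall>j\<in>I. (s j \<circ> r) \<longlonglongrightarrow> l j"
      by blast
    have "bounded (range (s j \<circ> r))"
      using insert.prems by (rule_tac bounded_subset[of "range (s j)"]) auto
    then obtain lj r' where r': "strict_mono r'" "(s j \<circ> r \<circ> r') \<longlonglongrightarrow> lj"
      using bounded_imp_convergent_subsequence by blast
    have "(s j' \<circ> (r \<circ> r')) \<longlonglongrightarrow> (l(j := lj)) j'" if "j' \<in> insert j I" for j'
    proof (cases "j' = j")
      case True
      then show ?thesis using r'(2) by (simp add: o_assoc)
    next
      case False
      then show ?thesis
        using that LIMSEQ_subseq_LIMSEQ[OF bspec[OF r(2)] r'(1), of j'] by (simp add: o_assoc)
    qed
    moreover have "strict_mono (r \<circ> r')"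
      using r(1) r'(1) by (simp add: strict_mono_def)
    ultimately show ?case by blast
  qed
  then show ?thesis using that by blast
qed

lemma decseq_tendsto_zero_if_subseq:
  fixes P :: "nat \<Rightarrow> real"
  assumes "decseq P" and "\<And>k. 0 \<le> P k" and "strict_mono r" and "(P \<circ> r) \<longlonglongrightarrow> 0"
  shows "P \<longlonglongrightarrow> 0"
proof -
  obtain L where L: "P \<longlonglongrightarrow> L"
    using decseq_convergent[OF assms(1), of 0] assms(2) by blast
  with LIMSEQ_unique[OF LIMSEQ_subseq_LIMSEQ[OF L assms(3)] assms(4)] show ?thesis by simp
qed

lemma finite_positive_lower_bound:
  fixes a :: "'i \<Rightarrow> real"
  assumes "finite I" and "\<And>i. i \<in> I \<Longrightarrow> 0 < a i"
  obtains c where "0 < c" and "\<And>i. i \<in> I \<Longrightarrow> c \<le> a i"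
proof
  show "0 < Min (insert 1 (a ` I))" using assms by simp
  show "Min (insert 1 (a ` I)) \<le> a i" if "i \<in> I" for i using assms that by simp
qed

lemma norm_sq_step_identity:
  fixes L w :: "'a::real_inner"
  assumes "s \<noteq> 0"
  shows "((norm L)\<^sup>2 - (norm (L - s *\<^sub>R w))\<^sup>2) / s = 2 * (L \<bullet> w) - s * (norm w)\<^sup>2"
proof -
  have "L \<bullet> (s *\<^sub>R w) = ((norm L)\<^sup>2 + (norm (s *\<^sub>R w))\<^sup>2 - (norm (L - s *\<^sub>R w))\<^sup>2) / 2"
    by (rule dot_norm_neg)
  then have "(norm L)\<^sup>2 - (norm (L - s *\<^sub>R w))\<^sup>2 = s * (2 * (L \<bullet> w) - s * (norm w)\<^sup>2)"
    by (simp add: power_mult_distrib power2_eq_square[of s] algebra_simps)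
  then show ?thesis using assms by simp
qed

lemma sum_weighted_three_point:
  fixes u v z :: "'i \<Rightarrow> 'a::real_inner"
  shows "(\<Sum>i\<in>I. c i * (norm (u i - z i))\<^sup>2) - (\<Sum>i\<in>I. c i * (norm (v i - z i))\<^sup>2)
    = (\<Sum>i\<in>I. c i * (norm (u i - v i))\<^sup>2) + 2 * (\<Sum>i\<in>I. c i * ((u i - v i) \<bullet> (v i - z i)))"
proof -
  have "c i * (norm (u i - z i))\<^sup>2 - c i * (norm (v i - z i))\<^sup>2
      = c i * (norm (u i - v i))\<^sup>2 + 2 * (c i * ((u i - v i) \<bullet> (v i - z i)))" for i
  proof -
    have "(norm (a + b))\<^sup>2 = (norm a)\<^sup>2 + 2 * (a \<bullet> b) + (norm b)\<^sup>2" for a b :: 'a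
      by (simp add: power2_norm_eq_inner inner_add_left inner_add_right inner_commute)
    from this[of "u i - v i" "v i - z i"]
    have "(norm (u i - z i))\<^sup>2 = (norm (u i - v i))\<^sup>2 + 2 * ((u i - v i) \<bullet> (v i - z i)) + (norm (v i - z i))\<^sup>2"
      by simp
    then show ?thesis by (simp only:) (simp add: algebra_simps)
  qed
  then show ?thesis
    by (simp add: sum_subtractf[symmetric] sum_distrib_left sum.distrib[symmetric])
qed

section \<open>The incidence operator\<close>

lemma valid_edges_finite: "valid_edges N E \<Longrightarrow> finite E"
  unfolding valid_edges_def by (rule finite_subset[of _ "{..<N} \<times> {..<N}"]) auto

lemma valid_edges_bounds: "valid_edges N E \<Longrightarrow> e \<in> E \<Longrightarrow> fst e < snd e \<and> snd e < N"
  unfolding valid_edges_def by auto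

lemma sum_group_edges_fst:
  assumes "valid_edges N E"
  shows "(\<Sum>i<N. \<Sum>e\<in>{e\<in>E. fst e = i}. h e) = (\<Sum>e\<in>E. h e)"
  using sum.group[of E "{..<N}" fst h] valid_edges_finite[OF assms] valid_edges_bounds[OF assms]
  by (force simp: image_subset_iff)

lemma sum_group_edges_snd:
  assumes "valid_edges N E"
  shows "(\<Sum>i<N. \<Sum>e\<in>{e\<in>E. snd e = i}. h e) = (\<Sum>e\<in>E. h e)"
  using sum.group[of E "{..<N}" snd h] valid_edges_finite[OF assms] valid_edges_bounds[OF assms]
  by (force simp: image_subset_iff)

lemma sum_AT_inner:
  fixes lam :: "nat \<times> nat \<Rightarrow> 'a::real_inner"
  assumes "valid_edges N E"
  shows "(\<Sum>i<N. AT E lam i \<bullet> v i) = (\<Sum>e\<in>E. lam e \<bullet> edge_diff v e)"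
proof -
  have "(\<Sum>i<N. AT E lam i \<bullet> v i)
      = (\<Sum>i<N. \<Sum>e\<in>{e\<in>E. fst e = i}. lam e \<bullet> v (fst e))
        - (\<Sum>i<N. \<Sum>e\<in>{e\<in>E. snd e = i}. lam e \<bullet> v (snd e))"
    unfolding AT_def by (simp add: inner_diff_left inner_sum_left sum_subtractf)
  also have "\<dots> = (\<Sum>e\<in>E. lam e \<bullet> v (fst e)) - (\<Sum>e\<in>E. lam e \<bullet> v (snd e))"
    by (simp only: sum_group_edges_fst[OF assms] sum_group_edges_snd[OF assms])
  finally show ?thesis
    by (simp add: edge_diff_def inner_diff_right sum_subtractf)
qed

lemma AT_add: "AT E (\<lambda>e. a e + b e) i = AT E a i + AT E b i"
  unfolding AT_def by (simp add: sum.distrib algebra_simps)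

lemma AT_diff: "AT E (\<lambda>e. a e - b e) i = AT E a i - AT E b i"
  unfolding AT_def by (simp add: sum_subtractf algebra_simps)

lemma AT_scaleR: "AT E (\<lambda>e. c *\<^sub>R (a e :: 'a::real_vector)) i = c *\<^sub>R AT E a i"
  unfolding AT_def by (simp add: scaleR_sum_right[symmetric] scaleR_right_diff_distrib)

lemma AT_tendsto:
  fixes F :: "nat \<Rightarrow> nat \<times> nat \<Rightarrow> 'a::real_normed_vector"
  assumes "\<And>e. e \<in> E \<Longrightarrow> (\<lambda>k. F k e) \<longlonglongrightarrow> G e"
  shows "(\<lambda>k. AT E (F k) i) \<longlonglongrightarrow> AT E G i"
  unfolding AT_def using assms by (intro tendsto_intros) auto

lemma degree_eq_card_fst_snd:
  assumes "valid_edges N E"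
  shows "degree E i = card {e\<in>E. fst e = i} + card {e\<in>E. snd e = i}"
proof -
  have "{e\<in>E. fst e = i \<or> snd e = i} = {e\<in>E. fst e = i} \<union> {e\<in>E. snd e = i}" by auto
  moreover have "{e\<in>E. fst e = i} \<inter> {e\<in>E. snd e = i} = {}"
    using valid_edges_bounds[OF assms] by fastforce
  ultimately show ?thesis
    unfolding degree_def using valid_edges_finite[OF assms] by (simp add: card_Un_disjoint)
qed

lemma AT_edge_diff_unit:
  fixes v :: "'a::real_vector"
  assumes "valid_edges N E"
  shows "AT E (edge_diff ((\<lambda>_. 0)(i := v))) i = real (degree E i) *\<^sub>R v"
proof -
  have "edge_diff ((\<lambda>_. 0)(i := v)) e = (if fst e = i then v else if snd e = i then - v else 0)"
    if "e \<in> E" for e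
    using valid_edges_bounds[OF assms that] by (auto simp: edge_diff_def)
  then have "AT E (edge_diff ((\<lambda>_. 0)(i := v))) i
      = (\<Sum>e\<in>{e\<in>E. fst e = i}. v) - (\<Sum>e\<in>{e\<in>E. snd e = i}. - v)"
    unfolding AT_def using valid_edges_bounds[OF assms]
    by (intro arg_cong2[where f = minus] sum.cong) fastforce+
  then show ?thesis
    by (simp add: degree_eq_card_fst_snd[OF assms] scaleR_add_left sum_negf sum_constant_scaleR)
qed

lemma AT_edge_diff_update:
  fixes X :: "nat \<Rightarrow> 'a::real_vector"
  assumes "valid_edges N E"
  shows "AT E (edge_diff (X(i := x))) i = AT E (edge_diff X) i + real (degree E i) *\<^sub>R (x - X i)"
proof -
  have "edge_diff (X(i := x)) = (\<lambda>e. edge_diff X e + edge_diff ((\<lambda>_. 0)(i := x - X i)) e)"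
    by (auto simp: edge_diff_def fun_eq_iff)
  then show ?thesis
    by (simp only: AT_add AT_edge_diff_unit[OF assms])
qed

lemma sum_degree_mult:
  assumes "valid_edges N E"
  shows "(\<Sum>i<N. real (degree E i) * phi i) = (\<Sum>e\<in>E. phi (fst e) + phi (snd e))"
proof -
  have "(\<Sum>i<N. real (degree E i) * phi i)
      = (\<Sum>i<N. \<Sum>e\<in>{e\<in>E. fst e = i}. phi (fst e)) + (\<Sum>i<N. \<Sum>e\<in>{e\<in>E. snd e = i}. phi (snd e))"
    unfolding degree_eq_card_fst_snd[OF assms] by (simp add: algebra_simps sum.distrib)
  then show ?thesis
    by (simp only: sum_group_edges_fst[OF assms] sum_group_edges_snd[OF assms] sum.distrib)
qed

lemma sum_edge_diff_norm_le:
  fixes v :: "nat \<Rightarrow> 'a::real_inner"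
  assumes "valid_edges N E"
  shows "(\<Sum>e\<in>E. (norm (edge_diff v e))\<^sup>2) \<le> 2 * (\<Sum>i<N. real (degree E i) * (norm (v i))\<^sup>2)"
proof -
  have "(norm (edge_diff v e))\<^sup>2 \<le> 2 * ((norm (v (fst e)))\<^sup>2 + (norm (v (snd e)))\<^sup>2)" for e
  proof -
    have "(norm (edge_diff v e))\<^sup>2 \<le> (norm (v (fst e)) + norm (v (snd e)))\<^sup>2"
      by (simp add: edge_diff_def norm_triangle_ineq4 power_mono)
    also have "\<dots> \<le> 2 * ((norm (v (fst e)))\<^sup>2 + (norm (v (snd e)))\<^sup>2)"
      by (smt (verit) sum_squares_bound power2_sum)
    finally show ?thesis .
  qed
  then show ?thesis
    unfolding sum_degree_mult[OF assms] sum_distrib_left by (intro sum_mono) simp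
qed

lemma sum_edge_diff_cross_lower_bound:
  fixes X Y :: "nat \<Rightarrow> 'a::real_inner"
  assumes "valid_edges N E" and "0 < t"
  shows "(2 - t) * (\<Sum>e\<in>E. (norm (edge_diff Y e))\<^sup>2)
      - 2 / t * (\<Sum>i<N. real (degree E i) * (norm (X i - Y i))\<^sup>2)
    \<le> 2 * (\<Sum>e\<in>E. edge_diff X e \<bullet> edge_diff Y e)"
proof -
  let ?a = "\<lambda>e. edge_diff (\<lambda>i. X i - Y i) e"
  have "(2 - t) * (norm (edge_diff Y e))\<^sup>2 - (norm (?a e))\<^sup>2 / t
      \<le> 2 * (edge_diff X e \<bullet> edge_diff Y e)" for e
  proof -
    have "2 * (edge_diff X e \<bullet> edge_diff Y e) = 2 * (norm (edge_diff Y e))\<^sup>2 + 2 * (?a e \<bullet> edge_diff Y e)"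
      by (simp add: edge_diff_def power2_norm_eq_inner algebra_simps)
    moreover have "(2 - t) * (norm (edge_diff Y e))\<^sup>2 = 2 * (norm (edge_diff Y e))\<^sup>2 - t * (norm (edge_diff Y e))\<^sup>2"
      by (simp add: left_diff_distrib)
    ultimately show ?thesis
      using young_ineq_inner[OF assms(2), of "edge_diff Y e" "?a e"] by linarith
  qed
  then have "(\<Sum>e\<in>E. (2 - t) * (norm (edge_diff Y e))\<^sup>2 - (norm (?a e))\<^sup>2 / t)
      \<le> (\<Sum>e\<in>E. 2 * (edge_diff X e \<bullet> edge_diff Y e))"
    by (rule sum_mono)
  moreover have "(\<Sum>e\<in>E. (norm (?a e))\<^sup>2) / t \<le> 2 / t * (\<Sum>i<N. real (degree E i) * (norm (X i - Y i))\<^sup>2)"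
    using sum_edge_diff_norm_le[OF assms(1), of "\<lambda>i. X i - Y i"] assms(2)
    by (simp add: divide_right_mono)
  ultimately show ?thesis
    by (simp add: sum_subtractf sum_distrib_left sum_divide_distrib[symmetric])
qed

lemma sum_inner_edge_diff_unit:
  fixes lam :: "nat \<times> nat \<Rightarrow> 'a::real_inner"
  assumes "valid_edges N E" and "i < N"
  shows "(\<Sum>e\<in>E. lam e \<bullet> edge_diff ((\<lambda>_. 0)(i := v)) e) = AT E lam i \<bullet> v"
proof -
  have "(\<Sum>e\<in>E. lam e \<bullet> edge_diff ((\<lambda>_. 0)(i := v)) e) = (\<Sum>j<N. AT E lam j \<bullet> ((\<lambda>_. 0)(i := v)) j)"
    by (rule sum_AT_inner[OF assms(1), symmetric])
  also have "\<dots> = (\<Sum>j<N. if j = i then AT E lam i \<bullet> v else 0)"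
    by (rule sum.cong) auto
  finally show ?thesis using assms(2) by simp
qed

lemma has_derivative_edge_diff_update:
  "((\<lambda>w. edge_diff (X(i := w)) e) has_derivative (\<lambda>v. edge_diff ((\<lambda>_. 0)(i := v)) e)) (at w)"
  by (cases "fst e = i"; cases "snd e = i") (auto simp: edge_diff_def intro!: derivative_eq_intros)

section \<open>Partial gradients of the augmented Lagrangian\<close>

lemma Fi_has_derivative_fst:
  assumes "\<And>z. (f i has_derivative (\<lambda>(a, b). gc i z \<bullet> a + gh i z \<bullet> b)) (at z)"
  shows "((\<lambda>w. Fi f mu1 mu2 i w y) has_derivative (\<lambda>v. (gc i (w, y) + mu1 *\<^sub>R w) \<bullet> v)) (at w)"
proof -
  have "((\<lambda>w. (w, y)) has_derivative (\<lambda>v. (v, 0))) (at w)"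
    by (auto intro!: derivative_eq_intros)
  from has_derivative_compose[OF this assms]
  have "((\<lambda>w. f i (w, y)) has_derivative (\<lambda>v. gc i (w, y) \<bullet> v)) (at w)" by simp
  then have "((\<lambda>w. f i (w, y) + mu1 / 2 * (w \<bullet> w) + mu2 / 2 * (norm y)\<^sup>2) has_derivative
      (\<lambda>v. gc i (w, y) \<bullet> v + mu1 / 2 * (w \<bullet> v + v \<bullet> w) + 0)) (at w)"
    by (intro derivative_intros)
  then show ?thesis
    unfolding Fi_def power2_norm_eq_inner
    by (rule has_derivative_eq_rhs) (auto simp: inner_commute algebra_simps)
qed

lemma Fi_has_derivative_snd:
  assumes "\<And>z. (f i has_derivative (\<lambda>(a, b). gc i z \<bullet> a + gh i z \<bullet> b)) (at z)"
  shows "((\<lambda>w. Fi f mu1 mu2 i x w) has_derivative (\<lambda>v. (gh i (x, w) + mu2 *\<^sub>R w) \<bullet> v)) (at w)"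
proof -
  have "((\<lambda>w. (x, w)) has_derivative (\<lambda>v. (0, v))) (at w)"
    by (auto intro!: derivative_eq_intros)
  from has_derivative_compose[OF this assms]
  have "((\<lambda>w. f i (x, w)) has_derivative (\<lambda>v. gh i (x, w) \<bullet> v)) (at w)" by simp
  then have "((\<lambda>w. f i (x, w) + mu1 / 2 * (x \<bullet> x) + mu2 / 2 * (w \<bullet> w)) has_derivative
      (\<lambda>v. gh i (x, w) \<bullet> v + 0 + mu2 / 2 * (w \<bullet> v + v \<bullet> w))) (at w)"
    by (intro derivative_intros)
  then show ?thesis
    unfolding Fi_def power2_norm_eq_inner
    by (rule has_derivative_eq_rhs) (auto simp: inner_commute algebra_simps)
qed

lemma has_derivative_half_sq_dist:
  "((\<lambda>w. c / 2 * (norm (w - x0))\<^sup>2) has_derivative (\<lambda>v. (c *\<^sub>R (w - x0)) \<bullet> v)) (at w)"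
proof -
  have "((\<lambda>w. c / 2 * ((w - x0) \<bullet> (w - x0))) has_derivative
      (\<lambda>v. c / 2 * ((w - x0) \<bullet> (v - 0) + (v - 0) \<bullet> (w - x0)))) (at w)"
    by (intro derivative_intros)
  then show ?thesis
    unfolding power2_norm_eq_inner
    by (rule has_derivative_eq_rhs) (auto simp: inner_commute algebra_simps)
qed

lemma FF_update:
  assumes "i < N"
  shows "FF f mu1 mu2 N (X(i := w)) Y
    = Fi f mu1 mu2 i w (Y i) + (\<Sum>j\<in>{..<N} - {i}. Fi f mu1 mu2 j (X j) (Y j))"
proof -
  have "(\<Sum>j\<in>{..<N} - {i}. Fi f mu1 mu2 j ((X(i := w)) j) (Y j))
      = (\<Sum>j\<in>{..<N} - {i}. Fi f mu1 mu2 j (X j) (Y j))"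
    by (rule sum.cong) auto
  then show ?thesis
    unfolding FF_def using assms by (simp add: sum.remove)
qed

lemma lagr_has_derivative_coordinate:
  assumes edges: "valid_edges N E" and i: "i < N"
    and grad: "\<And>z. (f i has_derivative (\<lambda>(a, b). gc i z \<bullet> a + gh i z \<bullet> b)) (at z)"
  shows "((\<lambda>w. lagr f mu1 mu2 N E rho (X(i := w)) Y lam) has_derivative
    (\<lambda>v. (gc i (w, Y i) + mu1 *\<^sub>R w - AT E lam i + rho *\<^sub>R AT E (edge_diff (X(i := w))) i) \<bullet> v))
    (at w)"
proof -
  let ?d = "\<lambda>v e. edge_diff ((\<lambda>_. 0)(i := v)) e"
  let ?r = "\<lambda>e. edge_diff (X(i := w)) e"
  have deriv: "((\<lambda>w. Fi f mu1 mu2 i w (Y i) + (\<Sum>j\<in>{..<N} - {i}. Fi f mu1 mu2 j (X j) (Y j))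
        - (\<Sum>e\<in>E. lam e \<bullet> edge_diff (X(i := w)) e)
        + rho / 2 * (\<Sum>e\<in>E. edge_diff (X(i := w)) e \<bullet> edge_diff (X(i := w)) e))
      has_derivative
      (\<lambda>v. (gc i (w, Y i) + mu1 *\<^sub>R w) \<bullet> v + 0 - (\<Sum>e\<in>E. lam e \<bullet> ?d v e)
        + rho / 2 * (\<Sum>e\<in>E. ?r e \<bullet> ?d v e + ?d v e \<bullet> ?r e))) (at w)"
    by (intro derivative_intros Fi_has_derivative_fst[of f i gc gh, OF grad] has_derivative_edge_diff_update)
  have quadratic: "(\<Sum>e\<in>E. ?r e \<bullet> ?d v e + ?d v e \<bullet> ?r e) = 2 * (AT E ?r i \<bullet> v)" for v
    using sum_inner_edge_diff_unit[OF edges i, of ?r v]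
    by (simp add: inner_commute sum_distrib_left[symmetric])
  show ?thesis
    unfolding lagr_def FF_update[OF i] power2_norm_eq_inner
    by (rule has_derivative_eq_rhs[OF deriv])
      (simp add: fun_eq_iff quadratic sum_inner_edge_diff_unit[OF edges i] inner_diff_left inner_add_left)
qed

section \<open>Convergence of the proximal ADMM\<close>

locale prox_admm =
  fixes N :: nat and E :: "(nat \<times> nat) set"
    and f :: "nat \<Rightarrow> ((real^'n) \<times> (real^'n)) \<Rightarrow> real"
    and gc gh :: "nat \<Rightarrow> ((real^'n) \<times> (real^'n)) \<Rightarrow> real^'n"
    and C tau zeta :: "nat \<Rightarrow> real"
    and mu1 mu2 m rho gamma :: real
    and Wc Wh :: "nat \<Rightarrow> nat \<Rightarrow> real^'n"
    and lam :: "nat \<Rightarrow> nat \<times> nat \<Rightarrow> real^'n"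
  assumes N2: "N \<ge> 2"
    and edges: "valid_edges N E"
    and grad: "\<And>i z. i < N \<Longrightarrow>
        (f i has_derivative (\<lambda>(a, b). gc i z \<bullet> a + gh i z \<bullet> b)) (at z)"
    and cvx: "\<And>i. i < N \<Longrightarrow> convex_on UNIV (f i)"
    and lip: "\<And>i z z'. i < N \<Longrightarrow>
        norm ((gc i z, gh i z) - (gc i z', gh i z')) \<le> C i * norm (z - z')"
    and mu1: "mu1 \<ge> 0"
    and m: "0 < m" "m \<le> mu2"
    and rho: "rho > 0"
    and gamma: "0 < gamma" "gamma < 2"
    and tau: "\<And>i. i < N \<Longrightarrow> tau i > rho * (real N / (2 - gamma) - 1) * real (degree E i)"
    and zeta: "\<And>i. i < N \<Longrightarrow> zeta i > C i / m * (C i + m)"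
    and step_i: "\<And>k i w. i < N \<Longrightarrow>
        lagr f mu1 mu2 N E rho ((Wc k)(i := Wc (Suc k) i)) (Wh k) (lam k)
          + tau i / 2 * (norm (Wc (Suc k) i - Wc k i))\<^sup>2
        \<le> lagr f mu1 mu2 N E rho ((Wc k)(i := w)) (Wh k) (lam k)
          + tau i / 2 * (norm (w - Wc k i))\<^sup>2"
    and step_ii: "\<And>k e. e \<in> E \<Longrightarrow>
        lam (Suc k) e = lam k e - (gamma * rho) *\<^sub>R edge_diff (Wc (Suc k)) e"
    and step_iii: "\<And>k i w. i < N \<Longrightarrow>
        Fi f mu1 mu2 i (Wc (Suc k) i) (Wh (Suc k) i)
          + zeta i / 2 * (norm (Wh (Suc k) i - Wh k i))\<^sup>2
        \<le> Fi f mu1 mu2 i (Wc (Suc k) i) w + zeta i / 2 * (norm (w - Wh k i))\<^sup>2"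
begin

abbreviation KKT :: "(nat \<Rightarrow> real^'n) \<Rightarrow> (nat \<Rightarrow> real^'n) \<Rightarrow> (nat \<times> nat \<Rightarrow> real^'n) \<Rightarrow> bool"
  where "KKT \<equiv> is_KKT gc gh mu1 mu2 N E"

definition primal_weight :: "nat \<Rightarrow> real"
  where "primal_weight i = tau i + rho * real (degree E i)"

definition three_point_const :: "nat \<Rightarrow> real"
  where "three_point_const i = C i / 2 + (C i)\<^sup>2 / (4 * m)"

text \<open>Squared H-distance of the k-th iterate to (xs, ys, ls), where
  H = diag(tau i + rho d_i, zeta i, 1 / (gamma rho)).\<close>
definition lyapunov ::
    "(nat \<Rightarrow> real^'n) \<Rightarrow> (nat \<Rightarrow> real^'n) \<Rightarrow> (nat \<times> nat \<Rightarrow> real^'n) \<Rightarrow> nat \<Rightarrow> real"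
  where "lyapunov xs ys ls k = (\<Sum>e\<in>E. (norm (lam k e - ls e))\<^sup>2) / (gamma * rho)
    + (\<Sum>i<N. primal_weight i * (norm (Wc k i - xs i))\<^sup>2)
    + (\<Sum>i<N. zeta i * (norm (Wh k i - ys i))\<^sup>2)"

definition residual :: "nat \<Rightarrow> real"
  where "residual k = (\<Sum>e\<in>E. (norm (edge_diff (Wc (Suc k)) e))\<^sup>2)
    + (\<Sum>i<N. (norm (Wc k i - Wc (Suc k) i))\<^sup>2) + (\<Sum>i<N. (norm (Wh k i - Wh (Suc k) i))\<^sup>2)"

lemma C_nonneg: "i < N \<Longrightarrow> 0 \<le> C i"
  by (rule lipschitz_bound_nonneg[OF lip[of i "(0, 0)" "(1, 0)"]]) (simp_all add: vec_eq_iff)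

lemma zeta_pos: "i < N \<Longrightarrow> 0 < zeta i"
  using zeta[of i] C_nonneg[of i] m by (smt (verit) divide_nonneg_pos mult_nonneg_nonneg)

lemma three_point_const_lt: "i < N \<Longrightarrow> 2 * three_point_const i < zeta i"
proof -
  assume i: "i < N"
  have "2 * three_point_const i = C i + (C i)\<^sup>2 / (2 * m)"
    by (simp add: three_point_const_def)
  also have "\<dots> \<le> C i / m * (C i + m)"
    using m(1) by (simp add: field_simps power2_eq_square)
  also have "\<dots> < zeta i" by (rule zeta[OF i])
  finally show ?thesis .
qed

lemma primal_weight_pos: "i < N \<Longrightarrow> 0 < primal_weight i"
proof -
  assume i: "i < N"
  have "1 \<le> real N / (2 - gamma)" using N2 gamma by (simp add: field_simps)
  then have "0 \<le> rho * (real N / (2 - gamma) - 1) * real (degree E i)" using rho by simp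
  then show ?thesis
    using tau[OF i] rho unfolding primal_weight_def by (smt (verit) of_nat_0_le_iff mult_nonneg_nonneg)
qed

lemma degree_weight_lt: "i < N \<Longrightarrow> 2 * rho * real (degree E i) < (2 - gamma) * primal_weight i"
proof -
  assume i: "i < N"
  have "rho * gamma * real (degree E i) \<le> rho * (real N - (2 - gamma)) * real (degree E i)"
    using N2 rho by (intro mult_right_mono mult_left_mono) auto
  also have "\<dots> = (2 - gamma) * (rho * (real N / (2 - gamma) - 1) * real (degree E i))"
    using gamma by (simp add: field_simps)
  also have "\<dots> < (2 - gamma) * tau i"
    using tau[OF i] gamma by simp
  finally show ?thesis
    unfolding primal_weight_def by (simp add: algebra_simps)
qed

text \<open>The coupling term A_i^T A is evaluated at the partially updated point; rewriting it through
  the previous iterate is what adds rho d_i to the proximal weight tau i.\<close>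
lemma x_update_optimality:
  assumes i: "i < N"
  shows "gc i (Wc (Suc k) i, Wh k i) + mu1 *\<^sub>R Wc (Suc k) i
    = AT E (\<lambda>e. lam k e - rho *\<^sub>R edge_diff (Wc k) e) i + primal_weight i *\<^sub>R (Wc k i - Wc (Suc k) i)"
proof -
  let ?phi = "\<lambda>w. lagr f mu1 mu2 N E rho ((Wc k)(i := w)) (Wh k) (lam k) + tau i / 2 * (norm (w - Wc k i))\<^sup>2"
  have "gc i (Wc (Suc k) i, Wh k i) + mu1 *\<^sub>R Wc (Suc k) i - AT E (lam k) i
      + rho *\<^sub>R AT E (edge_diff ((Wc k)(i := Wc (Suc k) i))) i + tau i *\<^sub>R (Wc (Suc k) i - Wc k i) = 0"
  proof (rule gradient_zero_at_minimum)
    show "(?phi has_derivative (\<lambda>v. (gc i (Wc (Suc k) i, Wh k i) + mu1 *\<^sub>R Wc (Suc k) i - AT E (lam k) i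
      + rho *\<^sub>R AT E (edge_diff ((Wc k)(i := Wc (Suc k) i))) i + tau i *\<^sub>R (Wc (Suc k) i - Wc k i)) \<bullet> v))
      (at (Wc (Suc k) i))"
      by (rule has_derivative_eq_rhs, rule has_derivative_add[OF
          lagr_has_derivative_coordinate[of N E i f gc gh, OF edges i grad[OF i]] has_derivative_half_sq_dist])
        (simp add: inner_add_left)
    show "?phi (Wc (Suc k) i) \<le> ?phi w" for w
      using step_i[OF i, of k w] by simp
  qed
  then show ?thesis
    by (simp add: AT_edge_diff_update[OF edges] AT_diff AT_scaleR primal_weight_def algebra_simps)
qed

lemma y_update_optimality:
  assumes i: "i < N"
  shows "gh i (Wc (Suc k) i, Wh (Suc k) i) + mu2 *\<^sub>R Wh (Suc k) i = zeta i *\<^sub>R (Wh k i - Wh (Suc k) i)"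
proof -
  let ?phi = "\<lambda>w. Fi f mu1 mu2 i (Wc (Suc k) i) w + zeta i / 2 * (norm (w - Wh k i))\<^sup>2"
  have "gh i (Wc (Suc k) i, Wh (Suc k) i) + mu2 *\<^sub>R Wh (Suc k) i + zeta i *\<^sub>R (Wh (Suc k) i - Wh k i) = 0"
  proof (rule gradient_zero_at_minimum)
    show "(?phi has_derivative (\<lambda>v. (gh i (Wc (Suc k) i, Wh (Suc k) i) + mu2 *\<^sub>R Wh (Suc k) i
      + zeta i *\<^sub>R (Wh (Suc k) i - Wh k i)) \<bullet> v)) (at (Wh (Suc k) i))"
      by (rule has_derivative_eq_rhs, rule has_derivative_add[OF
          Fi_has_derivative_snd[of f i gc gh, OF grad[OF i]] has_derivative_half_sq_dist])
        (simp add: inner_add_left)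
    show "?phi (Wh (Suc k) i) \<le> ?phi w" for w
      using step_iii[OF i, of k w] by simp
  qed
  then show ?thesis
    by (simp add: algebra_simps)
qed

lemma x_gradient_gap:
  assumes kkt: "KKT xs ys ls" and i: "i < N"
  shows "(gc i (Wc (Suc k) i, Wh k i) - gc i (xs i, ys i)) + mu1 *\<^sub>R (Wc (Suc k) i - xs i)
    = AT E (\<lambda>e. lam k e - ls e - rho *\<^sub>R edge_diff (Wc k) e) i
      + primal_weight i *\<^sub>R (Wc k i - Wc (Suc k) i)"
proof -
  have kkt_x: "AT E ls i = gc i (xs i, ys i) + mu1 *\<^sub>R xs i"
    using kkt i unfolding is_KKT_def by auto
  have "(gc i (Wc (Suc k) i, Wh k i) - gc i (xs i, ys i)) + mu1 *\<^sub>R (Wc (Suc k) i - xs i)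
      = (gc i (Wc (Suc k) i, Wh k i) + mu1 *\<^sub>R Wc (Suc k) i) - (gc i (xs i, ys i) + mu1 *\<^sub>R xs i)"
    by (simp add: algebra_simps)
  also have "\<dots> = AT E (\<lambda>e. lam k e - rho *\<^sub>R edge_diff (Wc k) e) i - AT E ls i
      + primal_weight i *\<^sub>R (Wc k i - Wc (Suc k) i)"
    by (simp only: x_update_optimality[OF i] kkt_x[symmetric]) (simp add: algebra_simps)
  finally show ?thesis
    by (simp only: AT_diff AT_scaleR) (simp add: algebra_simps)
qed

lemma y_gradient_gap:
  assumes kkt: "KKT xs ys ls" and i: "i < N"
  shows "(gh i (Wc (Suc k) i, Wh (Suc k) i) - gh i (xs i, ys i)) + mu2 *\<^sub>R (Wh (Suc k) i - ys i)
    = zeta i *\<^sub>R (Wh k i - Wh (Suc k) i)"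
proof -
  have "gh i (xs i, ys i) + mu2 *\<^sub>R ys i = 0"
    using kkt i unfolding is_KKT_def by auto
  then have "(gh i (Wc (Suc k) i, Wh (Suc k) i) - gh i (xs i, ys i)) + mu2 *\<^sub>R (Wh (Suc k) i - ys i)
      = gh i (Wc (Suc k) i, Wh (Suc k) i) + mu2 *\<^sub>R Wh (Suc k) i"
    by (simp add: algebra_simps)
  then show ?thesis
    by (simp only: y_update_optimality[OF i])
qed

lemma vertex_inequality:
  assumes kkt: "KKT xs ys ls" and i: "i < N"
  shows "- three_point_const i * (norm (Wh k i - Wh (Suc k) i))\<^sup>2
    \<le> AT E (\<lambda>e. lam k e - ls e - rho *\<^sub>R edge_diff (Wc k) e) i \<bullet> (Wc (Suc k) i - xs i)
      + primal_weight i * ((Wc k i - Wc (Suc k) i) \<bullet> (Wc (Suc k) i - xs i))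
      + zeta i * ((Wh k i - Wh (Suc k) i) \<bullet> (Wh (Suc k) i - ys i))"
proof -
  let ?x = "Wc (Suc k) i" and ?yo = "Wh k i" and ?yn = "Wh (Suc k) i"
  have "(gc i (?x, ?yo) - gc i (xs i, ys i)) \<bullet> (?x - xs i) + mu1 * (norm (?x - xs i))\<^sup>2
      = AT E (\<lambda>e. lam k e - ls e - rho *\<^sub>R edge_diff (Wc k) e) i \<bullet> (?x - xs i)
        + primal_weight i * ((Wc k i - ?x) \<bullet> (?x - xs i))"
    using arg_cong[OF x_gradient_gap[OF kkt i, of k], where f = "\<lambda>v. v \<bullet> (?x - xs i)"]
    by (simp only: inner_add_left inner_scaleR_left power2_norm_eq_inner)
  moreover have "(gh i (?x, ?yn) - gh i (xs i, ys i)) \<bullet> (?yn - ys i) + mu2 * (norm (?yn - ys i))\<^sup>2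
      = zeta i * ((?yo - ?yn) \<bullet> (?yn - ys i))"
    using arg_cong[OF y_gradient_gap[OF kkt i, of k], where f = "\<lambda>v. v \<bullet> (?yn - ys i)"]
    by (simp only: inner_add_left inner_scaleR_left power2_norm_eq_inner)
  moreover have "- three_point_const i * (norm (?yo - ?yn))\<^sup>2
      \<le> (gc i (?x, ?yo) - gc i (xs i, ys i)) \<bullet> (?x - xs i)
        + (gh i (?x, ?yn) - gh i (xs i, ys i)) \<bullet> (?yn - ys i) + m * (norm (?yn - ys i))\<^sup>2"
    unfolding three_point_const_def
    by (rule convex_lipschitz_gradient_three_point[OF cvx[OF i] grad[OF i] lip[OF i] m(1)])
  moreover have "m * (norm (?yn - ys i))\<^sup>2 \<le> mu2 * (norm (?yn - ys i))\<^sup>2" "0 \<le> mu1 * (norm (?x - xs i))\<^sup>2"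
    using m mu1 by (simp_all add: mult_right_mono)
  ultimately show ?thesis by linarith
qed

lemma dual_distance_step:
  "(\<Sum>e\<in>E. (norm (lam k e - ls e))\<^sup>2) / (gamma * rho)
      - (\<Sum>e\<in>E. (norm (lam (Suc k) e - ls e))\<^sup>2) / (gamma * rho)
    = 2 * (\<Sum>e\<in>E. (lam k e - ls e) \<bullet> edge_diff (Wc (Suc k)) e)
      - gamma * rho * (\<Sum>e\<in>E. (norm (edge_diff (Wc (Suc k)) e))\<^sup>2)"
proof -
  let ?w = "\<lambda>e. edge_diff (Wc (Suc k)) e" and ?L = "\<lambda>e. lam k e - ls e"
  have "(\<Sum>e\<in>E. (norm (?L e))\<^sup>2) / (gamma * rho) - (\<Sum>e\<in>E. (norm (lam (Suc k) e - ls e))\<^sup>2) / (gamma * rho)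
      = (\<Sum>e\<in>E. ((norm (?L e))\<^sup>2 - (norm (lam (Suc k) e - ls e))\<^sup>2) / (gamma * rho))"
    by (simp only: diff_divide_distrib[symmetric] sum_subtractf[symmetric] sum_divide_distrib[symmetric])
  also have "\<dots> = (\<Sum>e\<in>E. 2 * (?L e \<bullet> ?w e) - gamma * rho * (norm (?w e))\<^sup>2)"
  proof (rule sum.cong)
    fix e assume "e \<in> E"
    show "((norm (?L e))\<^sup>2 - (norm (lam (Suc k) e - ls e))\<^sup>2) / (gamma * rho)
        = 2 * (?L e \<bullet> ?w e) - gamma * rho * (norm (?w e))\<^sup>2"
      using norm_sq_step_identity[of "gamma * rho" "?L e" "?w e"] gamma rho
      by (simp add: step_ii[OF \<open>e \<in> E\<close>] algebra_simps)
  qed simp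
  finally show ?thesis
    by (simp only: sum_subtractf sum_distrib_left)
qed

lemma lyapunov_decrease_core:
  assumes kkt: "KKT xs ys ls"
  shows "2 * rho * (\<Sum>e\<in>E. edge_diff (Wc k) e \<bullet> edge_diff (Wc (Suc k)) e)
      - gamma * rho * (\<Sum>e\<in>E. (norm (edge_diff (Wc (Suc k)) e))\<^sup>2)
      + (\<Sum>i<N. primal_weight i * (norm (Wc k i - Wc (Suc k) i))\<^sup>2)
      + (\<Sum>i<N. (zeta i - 2 * three_point_const i) * (norm (Wh k i - Wh (Suc k) i))\<^sup>2)
    \<le> lyapunov xs ys ls k - lyapunov xs ys ls (Suc k)"
proof -
  let ?w = "\<lambda>e. edge_diff (Wc (Suc k)) e" and ?L = "\<lambda>e. lam k e - ls e"
  let ?B = "\<lambda>e. lam k e - ls e - rho *\<^sub>R edge_diff (Wc k) e"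
  have adjoint: "(\<Sum>i<N. AT E ?B i \<bullet> (Wc (Suc k) i - xs i))
      = (\<Sum>e\<in>E. ?L e \<bullet> ?w e) - rho * (\<Sum>e\<in>E. edge_diff (Wc k) e \<bullet> ?w e)"
  proof -
    have "edge_diff (\<lambda>i. Wc (Suc k) i - xs i) e = ?w e" if "e \<in> E" for e
      using kkt that unfolding is_KKT_def edge_diff_def by (auto simp: algebra_simps)
    then have "(\<Sum>i<N. AT E ?B i \<bullet> (Wc (Suc k) i - xs i)) = (\<Sum>e\<in>E. ?B e \<bullet> ?w e)"
      by (simp add: sum_AT_inner[OF edges])
    then show ?thesis
      by (simp add: inner_diff_left sum_subtractf sum_distrib_left)
  qed
  have vertices: "- (\<Sum>i<N. three_point_const i * (norm (Wh k i - Wh (Suc k) i))\<^sup>2)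
      \<le> (\<Sum>i<N. AT E ?B i \<bullet> (Wc (Suc k) i - xs i))
        + (\<Sum>i<N. primal_weight i * ((Wc k i - Wc (Suc k) i) \<bullet> (Wc (Suc k) i - xs i)))
        + (\<Sum>i<N. zeta i * ((Wh k i - Wh (Suc k) i) \<bullet> (Wh (Suc k) i - ys i)))"
    using sum_mono[of "{..<N}", OF vertex_inequality[OF kkt, of _ k]]
    by (simp add: sum.distrib sum_negf)
  have "(\<Sum>i<N. (zeta i - 2 * three_point_const i) * (norm (Wh k i - Wh (Suc k) i))\<^sup>2)
      = (\<Sum>i<N. zeta i * (norm (Wh k i - Wh (Suc k) i))\<^sup>2)
        - 2 * (\<Sum>i<N. three_point_const i * (norm (Wh k i - Wh (Suc k) i))\<^sup>2)"
    by (simp add: left_diff_distrib sum_subtractf sum_distrib_left mult.assoc)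
  moreover note sum_weighted_three_point[of primal_weight "\<lambda>i. Wc k i" xs "{..<N}" "\<lambda>i. Wc (Suc k) i"]
    sum_weighted_three_point[of zeta "\<lambda>i. Wh k i" ys "{..<N}" "\<lambda>i. Wh (Suc k) i"]
  moreover have "2 * rho * (\<Sum>e\<in>E. edge_diff (Wc k) e \<bullet> ?w e) = 2 * (rho * (\<Sum>e\<in>E. edge_diff (Wc k) e \<bullet> ?w e))"
    by simp
  ultimately show ?thesis
    using dual_distance_step[of k ls] adjoint vertices unfolding lyapunov_def by linarith
qed

lemma exists_young_parameter:
  obtains t where "0 < t" and "t < 2 - gamma"
    and "\<And>i. i < N \<Longrightarrow> 2 * rho * real (degree E i) < t * primal_weight i"
proof -
  obtain d where d: "0 < d" "\<And>i. i < N \<Longrightarrow> d \<le> 2 - gamma - 2 * rho * real (degree E i) / primal_weight i"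
  proof (rule finite_positive_lower_bound[of "{..<N}"])
    show "0 < 2 - gamma - 2 * rho * real (degree E i) / primal_weight i" if "i \<in> {..<N}" for i
      using degree_weight_lt[of i] primal_weight_pos[of i] that by (simp add: pos_divide_less_eq)
  qed auto
  obtain d' where d': "0 < d'" "d' \<le> d" "d' \<le> 2 - gamma"
    using d(1) gamma by (metis min.cobounded1 min.cobounded2 min_less_iff_conj diff_gt_0_iff_gt)
  show ?thesis
  proof
    show "0 < 2 - gamma - d' / 2" "2 - gamma - d' / 2 < 2 - gamma"
      using d' by simp_all
    show "2 * rho * real (degree E i) < (2 - gamma - d' / 2) * primal_weight i" if "i < N" for i
    proof -
      have "2 * rho * real (degree E i) / primal_weight i < 2 - gamma - d' / 2"
        using d(2)[OF that] d' by simp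
      then show ?thesis
        using primal_weight_pos[OF that] by (simp add: pos_divide_less_eq)
    qed
  qed
qed

lemma lyapunov_decrease:
  assumes kkt: "KKT xs ys ls" and t: "0 < t"
  shows "(2 - gamma - t) * rho * (\<Sum>e\<in>E. (norm (edge_diff (Wc (Suc k)) e))\<^sup>2)
      + (\<Sum>i<N. (primal_weight i - 2 * rho * real (degree E i) / t) * (norm (Wc k i - Wc (Suc k) i))\<^sup>2)
      + (\<Sum>i<N. (zeta i - 2 * three_point_const i) * (norm (Wh k i - Wh (Suc k) i))\<^sup>2)
    \<le> lyapunov xs ys ls k - lyapunov xs ys ls (Suc k)"
proof -
  let ?W = "\<Sum>e\<in>E. (norm (edge_diff (Wc (Suc k)) e))\<^sup>2"
  let ?D = "\<Sum>i<N. real (degree E i) * (norm (Wc k i - Wc (Suc k) i))\<^sup>2"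
  have "rho * ((2 - t) * ?W - 2 / t * ?D)
      \<le> rho * (2 * (\<Sum>e\<in>E. edge_diff (Wc k) e \<bullet> edge_diff (Wc (Suc k)) e))"
    using sum_edge_diff_cross_lower_bound[OF edges t, of "Wc (Suc k)" "Wc k"] rho
    by (intro mult_left_mono) auto
  moreover have "(\<Sum>i<N. (primal_weight i - 2 * rho * real (degree E i) / t) * (norm (Wc k i - Wc (Suc k) i))\<^sup>2)
      = (\<Sum>i<N. primal_weight i * (norm (Wc k i - Wc (Suc k) i))\<^sup>2) - 2 * rho / t * ?D"
    by (simp add: left_diff_distrib sum_subtractf sum_distrib_left mult.assoc)
  ultimately show ?thesis
    using lyapunov_decrease_core[OF kkt, of k] by (simp add: algebra_simps)
qed

lemma residual_nonneg: "0 \<le> residual k"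
  unfolding residual_def by (intro add_nonneg_nonneg sum_nonneg) auto

lemma lyapunov_sufficient_decrease:
  obtains c where "0 < c"
    and "\<And>xs ys ls k. KKT xs ys ls \<Longrightarrow> c * residual k \<le> lyapunov xs ys ls k - lyapunov xs ys ls (Suc k)"
proof -
  obtain t where t: "0 < t" "t < 2 - gamma"
    and deg: "\<And>i. i < N \<Longrightarrow> 2 * rho * real (degree E i) < t * primal_weight i"
    using exists_young_parameter by blast
  define cx where "cx i = primal_weight i - 2 * rho * real (degree E i) / t" for i
  define cy where "cy i = zeta i - 2 * three_point_const i" for i
  obtain c0 where c0: "0 < c0" "\<And>i. i < N \<Longrightarrow> c0 \<le> min (cx i) (cy i)"
  proof (rule finite_positive_lower_bound[of "{..<N}"])
    show "0 < min (cx i) (cy i)" if "i \<in> {..<N}" for i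
      using deg[of i] t(1) three_point_const_lt[of i] that
      by (simp add: cx_def cy_def pos_divide_less_eq mult.commute)
  qed auto
  define c where "c = min c0 ((2 - gamma - t) * rho)"
  show ?thesis
  proof
    show "0 < c" using c0(1) t(2) rho by (simp add: c_def)
    fix xs ys ls k assume kkt: "KKT xs ys ls"
    let ?dx = "\<lambda>i. (norm (Wc k i - Wc (Suc k) i))\<^sup>2" and ?dy = "\<lambda>i. (norm (Wh k i - Wh (Suc k) i))\<^sup>2"
    have "c * (\<Sum>e\<in>E. (norm (edge_diff (Wc (Suc k)) e))\<^sup>2)
        \<le> (2 - gamma - t) * rho * (\<Sum>e\<in>E. (norm (edge_diff (Wc (Suc k)) e))\<^sup>2)"
      by (intro mult_right_mono sum_nonneg) (auto simp: c_def)
    moreover have "c * (\<Sum>i<N. ?dx i) \<le> (\<Sum>i<N. cx i * ?dx i)"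
      unfolding sum_distrib_left using c0(2) by (intro sum_mono mult_right_mono) (auto simp: c_def min_le_iff_disj)
    moreover have "c * (\<Sum>i<N. ?dy i) \<le> (\<Sum>i<N. cy i * ?dy i)"
      unfolding sum_distrib_left using c0(2) by (intro sum_mono mult_right_mono) (auto simp: c_def min_le_iff_disj)
    ultimately show "c * residual k \<le> lyapunov xs ys ls k - lyapunov xs ys ls (Suc k)"
      using lyapunov_decrease[OF kkt t(1), of k] unfolding residual_def cx_def cy_def
      by (simp add: distrib_left)
  qed
qed

lemma lyapunov_bounds:
  shows lyapunov_nonneg: "0 \<le> lyapunov xs ys ls k"
    and lyapunov_ge_dual: "e \<in> E \<Longrightarrow> (norm (lam k e - ls e))\<^sup>2 / (gamma * rho) \<le> lyapunov xs ys ls k"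
    and lyapunov_ge_x: "i < N \<Longrightarrow> primal_weight i * (norm (Wc k i - xs i))\<^sup>2 \<le> lyapunov xs ys ls k"
    and lyapunov_ge_y: "i < N \<Longrightarrow> zeta i * (norm (Wh k i - ys i))\<^sup>2 \<le> lyapunov xs ys ls k"
proof -
  let ?S1 = "(\<Sum>e\<in>E. (norm (lam k e - ls e))\<^sup>2) / (gamma * rho)"
  let ?S2 = "\<Sum>i<N. primal_weight i * (norm (Wc k i - xs i))\<^sup>2"
  let ?S3 = "\<Sum>i<N. zeta i * (norm (Wh k i - ys i))\<^sup>2"
  have gr: "0 < gamma * rho" using gamma rho by simp
  have S1: "0 \<le> ?S1" using gr by (simp add: sum_nonneg)
  have S2: "0 \<le> ?S2" using primal_weight_pos by (intro sum_nonneg) (simp add: less_imp_le)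
  have S3: "0 \<le> ?S3" using zeta_pos by (intro sum_nonneg) (simp add: less_imp_le)
  show "0 \<le> lyapunov xs ys ls k"
    using S1 S2 S3 by (simp add: lyapunov_def)
  show "(norm (lam k e - ls e))\<^sup>2 / (gamma * rho) \<le> lyapunov xs ys ls k" if "e \<in> E"
  proof -
    have "(norm (lam k e - ls e))\<^sup>2 \<le> (\<Sum>e\<in>E. (norm (lam k e - ls e))\<^sup>2)"
      using that valid_edges_finite[OF edges] by (intro member_le_sum) auto
    then show ?thesis
      using divide_right_mono[OF _ less_imp_le[OF gr]] S2 S3 by (fastforce simp: lyapunov_def)
  qed
  show "primal_weight i * (norm (Wc k i - xs i))\<^sup>2 \<le> lyapunov xs ys ls k" if "i < N"
  proof -
    have "primal_weight i * (norm (Wc k i - xs i))\<^sup>2 \<le> ?S2"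
      using that primal_weight_pos by (intro member_le_sum) (auto simp: less_imp_le)
    then show ?thesis using S1 S3 by (simp add: lyapunov_def)
  qed
  show "zeta i * (norm (Wh k i - ys i))\<^sup>2 \<le> lyapunov xs ys ls k" if "i < N"
  proof -
    have "zeta i * (norm (Wh k i - ys i))\<^sup>2 \<le> ?S3"
      using that zeta_pos by (intro member_le_sum) (auto simp: less_imp_le)
    then show ?thesis using S1 S2 by (simp add: lyapunov_def)
  qed
qed

lemma lyapunov_antimono:
  assumes "KKT xs ys ls"
  shows "decseq (lyapunov xs ys ls)"
proof (rule decseq_SucI)
  obtain c where c: "0 < c"
    and decrease: "\<And>xs ys ls k. KKT xs ys ls \<Longrightarrow> c * residual k \<le> lyapunov xs ys ls k - lyapunov xs ys ls (Suc k)"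
    using lyapunov_sufficient_decrease by blast
  show "lyapunov xs ys ls (Suc k) \<le> lyapunov xs ys ls k" for k
    using decrease[OF assms, of k] mult_nonneg_nonneg[OF less_imp_le[OF c] residual_nonneg[of k]]
    by linarith
qed

lemma residual_tendsto_zero:
  assumes kkt: "KKT xs ys ls"
  shows "residual \<longlonglongrightarrow> 0"
proof -
  obtain c where c: "0 < c"
    and decrease: "\<And>xs ys ls k. KKT xs ys ls \<Longrightarrow> c * residual k \<le> lyapunov xs ys ls k - lyapunov xs ys ls (Suc k)"
    using lyapunov_sufficient_decrease by blast
  have "\<forall>k. 0 \<le> lyapunov xs ys ls k"
    by (simp add: lyapunov_nonneg)
  then obtain L where L: "lyapunov xs ys ls \<longlonglongrightarrow> L"
    using decseq_convergent[OF lyapunov_antimono[OF kkt]] by blast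
  have "(\<lambda>k. lyapunov xs ys ls k - lyapunov xs ys ls (Suc k)) \<longlonglongrightarrow> 0"
    using tendsto_diff[OF L LIMSEQ_Suc[OF L]] by simp
  then have gap: "(\<lambda>k. (lyapunov xs ys ls k - lyapunov xs ys ls (Suc k)) / c) \<longlonglongrightarrow> 0"
    by (rule tendsto_divide_zero)
  have bound: "norm (residual k) \<le> (lyapunov xs ys ls k - lyapunov xs ys ls (Suc k)) / c" for k
    using decrease[OF kkt, of k] residual_nonneg[of k] c by (simp add: pos_le_divide_eq mult.commute)
  show ?thesis
    by (rule Lim_null_comparison[OF always_eventually[OF allI[OF bound]] gap])
qed

lemma residual_parts_tendsto_zero:
  assumes "residual \<longlonglongrightarrow> 0"
  shows "e \<in> E \<Longrightarrow> (\<lambda>k. edge_diff (Wc k) e) \<longlonglongrightarrow> 0"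
    and "i < N \<Longrightarrow> (\<lambda>k. Wc k i - Wc (Suc k) i) \<longlonglongrightarrow> 0"
    and "i < N \<Longrightarrow> (\<lambda>k. Wh k i - Wh (Suc k) i) \<longlonglongrightarrow> 0"
proof -
  let ?A = "\<lambda>k. \<Sum>e\<in>E. (norm (edge_diff (Wc (Suc k)) e))\<^sup>2"
  let ?B = "\<lambda>k. \<Sum>i<N. (norm (Wc k i - Wc (Suc k) i))\<^sup>2"
  let ?C = "\<lambda>k. \<Sum>i<N. (norm (Wh k i - Wh (Suc k) i))\<^sup>2"
  have nonneg: "0 \<le> ?A k" "0 \<le> ?B k" "0 \<le> ?C k" for k
    by (simp_all add: sum_nonneg)
  have fin: "finite E" by (rule valid_edges_finite[OF edges])
  show "(\<lambda>k. edge_diff (Wc k) e) \<longlonglongrightarrow> 0" if "e \<in> E"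
  proof (rule LIMSEQ_imp_Suc, rule sq_norm_bounded_tendsto_zero[of 1 _ residual])
    show "1 * (norm (edge_diff (Wc (Suc k)) e))\<^sup>2 \<le> residual k" for k
      using member_le_sum[of e E "\<lambda>e. (norm (edge_diff (Wc (Suc k)) e))\<^sup>2"] that fin nonneg[of k]
      by (simp add: residual_def)
  qed (simp_all add: assms)
  show "(\<lambda>k. Wc k i - Wc (Suc k) i) \<longlonglongrightarrow> 0" if "i < N"
  proof (rule sq_norm_bounded_tendsto_zero[of 1 _ residual])
    show "1 * (norm (Wc k i - Wc (Suc k) i))\<^sup>2 \<le> residual k" for k
      using member_le_sum[of i "{..<N}" "\<lambda>i. (norm (Wc k i - Wc (Suc k) i))\<^sup>2"] that nonneg[of k]
      by (simp add: residual_def)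
  qed (simp_all add: assms)
  show "(\<lambda>k. Wh k i - Wh (Suc k) i) \<longlonglongrightarrow> 0" if "i < N"
  proof (rule sq_norm_bounded_tendsto_zero[of 1 _ residual])
    show "1 * (norm (Wh k i - Wh (Suc k) i))\<^sup>2 \<le> residual k" for k
      using member_le_sum[of i "{..<N}" "\<lambda>i. (norm (Wh k i - Wh (Suc k) i))\<^sup>2"] that nonneg[of k]
      by (simp add: residual_def)
  qed (simp_all add: assms)
qed

lemma gradient_tendsto:
  assumes i: "i < N" and Z: "Z \<longlonglongrightarrow> z"
  shows "(\<lambda>j. gc i (Z j)) \<longlonglongrightarrow> gc i z" and "(\<lambda>j. gh i (Z j)) \<longlonglongrightarrow> gh i z"
proof -
  have "lipschitz_on (C i) UNIV (\<lambda>z. (gc i z, gh i z))"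
    using lip[OF i] C_nonneg[OF i] by (simp add: lipschitz_on_def dist_norm)
  then have "(\<lambda>j. (gc i (Z j), gh i (Z j))) \<longlonglongrightarrow> (gc i z, gh i z)"
    using isCont_tendsto_compose[OF lipschitz_on_continuous_within Z] by blast
  from tendsto_fst[OF this] tendsto_snd[OF this]
  show "(\<lambda>j. gc i (Z j)) \<longlonglongrightarrow> gc i z" and "(\<lambda>j. gh i (Z j)) \<longlonglongrightarrow> gh i z"
    by simp_all
qed

lemma iterates_convergent_subseq:
  assumes kkt: "KKT xs ys ls"
  obtains r xb yb lb where "strict_mono r"
    and "\<And>i. i < N \<Longrightarrow> (\<lambda>j. Wc (r j) i) \<longlonglongrightarrow> xb i"
    and "\<And>i. i < N \<Longrightarrow> (\<lambda>j. Wh (r j) i) \<longlonglongrightarrow> yb i"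
    and "\<And>e. e \<in> E \<Longrightarrow> (\<lambda>j. lam (r j) e) \<longlonglongrightarrow> lb e"
proof -
  have below_start: "lyapunov xs ys ls k \<le> lyapunov xs ys ls 0" for k
    using lyapunov_antimono[OF kkt] by (simp add: decseq_def)
  define s :: "nat + nat + (nat \<times> nat) \<Rightarrow> nat \<Rightarrow> real^'n" where
    "s j k = (case j of Inl i \<Rightarrow> Wc k i | Inr (Inl i) \<Rightarrow> Wh k i | Inr (Inr e) \<Rightarrow> lam k e)" for j k
  let ?I = "Inl ` {..<N} \<union> Inr ` Inl ` {..<N} \<union> Inr ` Inr ` E"
  have "bounded (range (s j))" if "j \<in> ?I" for j
  proof -
    have gr: "0 < 1 / (gamma * rho)" using gamma rho by simp
    have "bounded (range (\<lambda>k. Wc k i))" if "i < N" for i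
      using order_trans[OF lyapunov_ge_x[OF that] below_start]
      by (intro sq_norm_bounded_imp_bounded[OF primal_weight_pos[OF that]])
    moreover have "bounded (range (\<lambda>k. Wh k i))" if "i < N" for i
      using order_trans[OF lyapunov_ge_y[OF that] below_start]
      by (intro sq_norm_bounded_imp_bounded[OF zeta_pos[OF that]])
    moreover have "bounded (range (\<lambda>k. lam k e))" if "e \<in> E" for e
      using order_trans[OF lyapunov_ge_dual[OF that] below_start]
      by (intro sq_norm_bounded_imp_bounded[OF gr]) simp
    ultimately show ?thesis
      using that by (auto simp: s_def)
  qed
  then obtain r l where r: "strict_mono r" and l: "\<And>j. j \<in> ?I \<Longrightarrow> (s j \<circ> r) \<longlonglongrightarrow> l j"
    using finite_family_convergent_subseq[of ?I s] valid_edges_finite[OF edges] by blast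
  show ?thesis
  proof (rule that[OF r])
    show "(\<lambda>j. Wc (r j) i) \<longlonglongrightarrow> l (Inl i)" if "i < N" for i
      using l[of "Inl i"] that by (simp add: s_def o_def)
    show "(\<lambda>j. Wh (r j) i) \<longlonglongrightarrow> l (Inr (Inl i))" if "i < N" for i
      using l[of "Inr (Inl i)"] that by (simp add: s_def o_def)
    show "(\<lambda>j. lam (r j) e) \<longlonglongrightarrow> l (Inr (Inr e))" if "e \<in> E" for e
      using l[of "Inr (Inr e)"] that by (simp add: s_def o_def)
  qed
qed

lemma cluster_point_is_KKT:
  assumes res: "residual \<longlonglongrightarrow> 0" and r: "strict_mono r"
    and x: "\<And>i. i < N \<Longrightarrow> (\<lambda>j. Wc (r j) i) \<longlonglongrightarrow> xb i"
    and y: "\<And>i. i < N \<Longrightarrow> (\<lambda>j. Wh (r j) i) \<longlonglongrightarrow> yb i"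
    and l: "\<And>e. e \<in> E \<Longrightarrow> (\<lambda>j. lam (r j) e) \<longlonglongrightarrow> lb e"
  shows "KKT xb yb lb"
proof -
  note step = residual_parts_tendsto_zero[OF res, THEN LIMSEQ_subseq_LIMSEQ[OF _ r], unfolded o_def]
  have x_step: "(\<lambda>j. Wc (r j) i - Wc (Suc (r j)) i) \<longlonglongrightarrow> 0"
    and y_step: "(\<lambda>j. Wh (r j) i - Wh (Suc (r j)) i) \<longlonglongrightarrow> 0" if "i < N" for i
    using step(2,3)[OF that] by simp_all
  have x_next: "(\<lambda>j. Wc (Suc (r j)) i) \<longlonglongrightarrow> xb i"
    and y_next: "(\<lambda>j. Wh (Suc (r j)) i) \<longlonglongrightarrow> yb i"
    if "i < N" for i
    using tendsto_diff[OF x[OF that] x_step[OF that]] tendsto_diff[OF y[OF that] y_step[OF that]] by simp_all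
  have feasible: "edge_diff xb e = 0" if e: "e \<in> E" for e
  proof (rule LIMSEQ_unique)
    show "(\<lambda>j. edge_diff (Wc (r j)) e) \<longlonglongrightarrow> edge_diff xb e"
      unfolding edge_diff_def using valid_edges_bounds[OF edges e] by (intro tendsto_diff x) auto
    show "(\<lambda>j. edge_diff (Wc (r j)) e) \<longlonglongrightarrow> 0"
      using step(1)[OF e] .
  qed
  have stationary_x: "AT E lb i = gc i (xb i, yb i) + mu1 *\<^sub>R xb i" if i: "i < N" for i
  proof (rule LIMSEQ_unique)
    show "(\<lambda>j. gc i (Wc (Suc (r j)) i, Wh (r j) i) + mu1 *\<^sub>R Wc (Suc (r j)) i)
        \<longlonglongrightarrow> gc i (xb i, yb i) + mu1 *\<^sub>R xb i"
      by (intro tendsto_intros gradient_tendsto(1)[OF i] x_next[OF i] y[OF i])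
    have "(\<lambda>j. AT E (\<lambda>e. lam (r j) e - rho *\<^sub>R edge_diff (Wc (r j)) e) i
        + primal_weight i *\<^sub>R (Wc (r j) i - Wc (Suc (r j)) i))
      \<longlonglongrightarrow> AT E (\<lambda>e. lb e - rho *\<^sub>R 0) i + primal_weight i *\<^sub>R 0"
      by (intro tendsto_intros AT_tendsto l step(1) x_step[OF i])
    then show "(\<lambda>j. gc i (Wc (Suc (r j)) i, Wh (r j) i) + mu1 *\<^sub>R Wc (Suc (r j)) i) \<longlonglongrightarrow> AT E lb i"
      by (simp add: x_update_optimality[OF i])
  qed
  have stationary_y: "gh i (xb i, yb i) + mu2 *\<^sub>R yb i = 0" if i: "i < N" for i
  proof (rule LIMSEQ_unique)
    show "(\<lambda>j. gh i (Wc (Suc (r j)) i, Wh (Suc (r j)) i) + mu2 *\<^sub>R Wh (Suc (r j)) i)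
        \<longlonglongrightarrow> gh i (xb i, yb i) + mu2 *\<^sub>R yb i"
      by (intro tendsto_intros gradient_tendsto(2)[OF i] x_next[OF i] y_next[OF i])
    have "(\<lambda>j. zeta i *\<^sub>R (Wh (r j) i - Wh (Suc (r j)) i)) \<longlonglongrightarrow> zeta i *\<^sub>R 0"
      by (intro tendsto_intros y_step[OF i])
    then show "(\<lambda>j. gh i (Wc (Suc (r j)) i, Wh (Suc (r j)) i) + mu2 *\<^sub>R Wh (Suc (r j)) i) \<longlonglongrightarrow> 0"
      by (simp add: y_update_optimality[OF i])
  qed
  show ?thesis
    unfolding is_KKT_def using feasible stationary_x stationary_y by auto
qed

lemma iterates_converge_to_KKT:
  assumes kkt: "KKT xs ys ls"
  shows "\<exists>Wcs Whs lams. KKT Wcs Whs lams \<and>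
           (\<forall>i<N. (\<lambda>k. Wc k i) \<longlonglongrightarrow> Wcs i) \<and>
           (\<forall>i<N. (\<lambda>k. Wh k i) \<longlonglongrightarrow> Whs i) \<and>
           (\<forall>e\<in>E. (\<lambda>k. lam k e) \<longlonglongrightarrow> lams e)"
proof -
  obtain r xb yb lb where r: "strict_mono r"
    and x: "\<And>i. i < N \<Longrightarrow> (\<lambda>j. Wc (r j) i) \<longlonglongrightarrow> xb i"
    and y: "\<And>i. i < N \<Longrightarrow> (\<lambda>j. Wh (r j) i) \<longlonglongrightarrow> yb i"
    and l: "\<And>e. e \<in> E \<Longrightarrow> (\<lambda>j. lam (r j) e) \<longlonglongrightarrow> lb e"
    using iterates_convergent_subseq[OF kkt] by blast
  have kkt_limit: "KKT xb yb lb"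
    by (rule cluster_point_is_KKT[OF residual_tendsto_zero[OF kkt] r x y l])
  have "(\<lambda>j. lyapunov xb yb lb (r j)) \<longlonglongrightarrow>
      (\<Sum>e\<in>E. (norm (lb e - lb e))\<^sup>2) / (gamma * rho)
      + (\<Sum>i<N. primal_weight i * (norm (xb i - xb i))\<^sup>2) + (\<Sum>i<N. zeta i * (norm (yb i - yb i))\<^sup>2)"
    unfolding lyapunov_def by (intro tendsto_intros x y l) (use gamma rho in auto)
  then have lyapunov_limit: "lyapunov xb yb lb \<longlonglongrightarrow> 0"
    by (intro decseq_tendsto_zero_if_subseq[OF lyapunov_antimono[OF kkt_limit] lyapunov_nonneg r])
      (simp add: o_def)
  have "(\<lambda>k. Wc k i) \<longlonglongrightarrow> xb i" if "i < N" for i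
    using sq_norm_bounded_tendsto_zero[OF primal_weight_pos[OF that] lyapunov_ge_x[OF that] lyapunov_limit]
    by (rule LIM_zero_cancel)
  moreover have "(\<lambda>k. Wh k i) \<longlonglongrightarrow> yb i" if "i < N" for i
    using sq_norm_bounded_tendsto_zero[OF zeta_pos[OF that] lyapunov_ge_y[OF that] lyapunov_limit]
    by (rule LIM_zero_cancel)
  moreover have "(\<lambda>k. lam k e) \<longlonglongrightarrow> lb e" if "e \<in> E" for e
  proof -
    have "0 < 1 / (gamma * rho)" using gamma rho by simp
    then have "(\<lambda>k. lam k e - lb e) \<longlonglongrightarrow> 0"
      by (rule sq_norm_bounded_tendsto_zero[OF _ _ lyapunov_limit]) (simp add: lyapunov_ge_dual[OF that])
    then show ?thesis
      by (rule LIM_zero_cancel)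
  qed
  ultimately show ?thesis
    using kkt_limit by blast
qed

end

theorem proposition1:
  fixes N :: nat and E :: "(nat \<times> nat) set"
    and f :: "nat \<Rightarrow> ((real^'n) \<times> (real^'n)) \<Rightarrow> real"
    and gc gh :: "nat \<Rightarrow> ((real^'n) \<times> (real^'n)) \<Rightarrow> real^'n"
    and C tau zeta :: "nat \<Rightarrow> real"
    and mu1 mu2 m rho gamma :: real
    and Wc Wh :: "nat \<Rightarrow> nat \<Rightarrow> real^'n"
    and lam :: "nat \<Rightarrow> nat \<times> nat \<Rightarrow> real^'n"
  assumes N2: "N \<ge> 2"
    and edges: "valid_edges N E"
    and conn: "graph_connected N E"
    and grad: "\<And>i z. i < N \<Longrightarrow>
        (f i has_derivative (\<lambda>(a, b). gc i z \<bullet> a + gh i z \<bullet> b)) (at z)"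
    and cvx: "\<And>i. i < N \<Longrightarrow> convex_on UNIV (f i)"
    and lip: "\<And>i z z'. i < N \<Longrightarrow>
        norm ((gc i z, gh i z) - (gc i z', gh i z')) \<le> C i * norm (z - z')"
    and mu1: "mu1 \<ge> 0" and mu2: "mu2 > 0"
    and m: "0 < m" "m \<le> mu2"
    and rho: "rho > 0"
    and gamma: "0 < gamma" "gamma < 2"
    and KKT_exists: "\<exists>Wc' Wh' lam'. is_KKT gc gh mu1 mu2 N E Wc' Wh' lam'"
    and tau: "\<And>i. i < N \<Longrightarrow> tau i > rho * (real N / (2 - gamma) - 1) * real (degree E i)"
    and zeta: "\<And>i. i < N \<Longrightarrow> zeta i > C i / m * (C i + m)"
    and step_i: "\<And>k i w. i < N \<Longrightarrow>
        lagr f mu1 mu2 N E rho ((Wc k)(i := Wc (Suc k) i)) (Wh k) (lam k)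
          + tau i / 2 * (norm (Wc (Suc k) i - Wc k i))\<^sup>2
        \<le> lagr f mu1 mu2 N E rho ((Wc k)(i := w)) (Wh k) (lam k)
          + tau i / 2 * (norm (w - Wc k i))\<^sup>2"
    and step_ii: "\<And>k e. e \<in> E \<Longrightarrow>
        lam (Suc k) e = lam k e - (gamma * rho) *\<^sub>R edge_diff (Wc (Suc k)) e"
    and step_iii: "\<And>k i w. i < N \<Longrightarrow>
        Fi f mu1 mu2 i (Wc (Suc k) i) (Wh (Suc k) i)
          + zeta i / 2 * (norm (Wh (Suc k) i - Wh k i))\<^sup>2
        \<le> Fi f mu1 mu2 i (Wc (Suc k) i) w + zeta i / 2 * (norm (w - Wh k i))\<^sup>2"
  shows "\<exists>Wcs Whs lams. is_KKT gc gh mu1 mu2 N E Wcs Whs lams \<and>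
           (\<forall>i<N. (\<lambda>k. Wc k i) \<longlonglongrightarrow> Wcs i) \<and>
           (\<forall>i<N. (\<lambda>k. Wh k i) \<longlonglongrightarrow> Whs i) \<and>
           (\<forall>e\<in>E. (\<lambda>k. lam k e) \<longlonglongrightarrow> lams e)"
proof -
  interpret prox_admm N E f gc gh C tau zeta mu1 mu2 m rho gamma Wc Wh lam
    by unfold_locales (fact N2 edges grad cvx lip mu1 m rho gamma tau zeta step_i step_ii step_iii)+
  obtain xs ys ls where "is_KKT gc gh mu1 mu2 N E xs ys ls"
    using KKT_exists by blast
  then show ?thesis
    by (rule iterates_converge_to_KKT)
qed

end
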